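(* Let $G=(V,E)$ be a tree, $k\ge1$, and $f:E\to\{0,\dots,k\}$ an arbitrary labeling. Choose any orientation of $G$ as a rooted out-tree. Then $f$ is a valid labeling if and only if (1) for every $u\in V$, if $e=(u',u)\in E$ is the edge entering $u$, then $f(e)\notin S(u)$ or $f(e)=0$; and (2) for every $u\in V$ and distinct edges $e,e'\in\delta^+(u)$, the sets $L(e)$ and $L(e')$ are disjoint except possibly for the label $0$, i.e. $L(e)\cap L(e')\subseteq\{0\}$.
   Context: A valid labeling is a function $f:E\to\{0,\dots,k\}$ such that for every pair of distinct edges $e_1,e_2$ with $f(e_1)=f(e_2)>0$ there is an edge $e_3$ on the simple path between $e_1$ and $e_2$ with $f(e_3)>f(e_1)$. In a rooted out-tree, an edge from $u$ to $v$ is written $(u,v)$ and $\delta^+(u)$ is the set of edges leaving $u$. For edges $e,e'$, $e'$ is visible from $e$ if $e'$ lies on a directed path starting with $e$ and ending with $e'$ and no edge $e''$ on this path has $f(e'')>f(e')$. $L(e)$ (visibility sequence of $e$) is the set of labels $f(e')$ of edges $e'$ visible from $e$ (listed in ascending order). For a vertex $u$, $S(u)=\bigcup_{e\in\delta^+(u)}L(e)$. *)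

theory Defs
  imports Main
begin

definition upath :: "'a set set \<Rightarrow> 'a list \<Rightarrow> bool" where
  "upath E ps \<longleftrightarrow> ps \<noteq> [] \<and> distinct ps \<and>
     (\<forall>i. Suc i < length ps \<longrightarrow> {ps ! i, ps ! Suc i} \<in> E)"

definition path_edges :: "'a list \<Rightarrow> 'a set set" where
  "path_edges ps = {{ps ! i, ps ! Suc i} | i. Suc i < length ps}"

definition is_tree :: "'a set \<Rightarrow> 'a set set \<Rightarrow> bool" where
  "is_tree V E \<longleftrightarrow> finite V \<and> V \<noteq> {} \<and>
     (\<forall>e\<in>E. \<exists>u v. e = {u, v} \<and> u \<in> V \<and> v \<in> V \<and> u \<noteq> v) \<and>
     (\<forall>u\<in>V. \<forall>v\<in>V. \<exists>!ps. upath E ps \<and> hd ps = u \<and> last ps = v)"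

definition path_between_edges :: "'a set set \<Rightarrow> 'a set \<Rightarrow> 'a set \<Rightarrow> 'a list \<Rightarrow> bool" where
  "path_between_edges E e1 e2 ps \<longleftrightarrow> upath E ps \<and> length ps \<ge> 2 \<and>
     {ps ! 0, ps ! 1} = e1 \<and> {ps ! (length ps - 2), ps ! (length ps - 1)} = e2"

definition valid_labeling :: "'a set set \<Rightarrow> ('a set \<Rightarrow> nat) \<Rightarrow> bool" where
  "valid_labeling E f \<longleftrightarrow>
     (\<forall>e1\<in>E. \<forall>e2\<in>E. e1 \<noteq> e2 \<and> f e1 = f e2 \<and> f e1 > 0 \<longrightarrow>
        (\<exists>ps e3. path_between_edges E e1 e2 ps \<and> e3 \<in> path_edges ps \<and> f e3 > f e1))"

text \<open>Orientation as a rooted out-tree with root r: the edge {u,v} is oriented (u,v)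
 iff u immediately precedes v on the path from r to v.\<close>

definition arc :: "'a set set \<Rightarrow> 'a \<Rightarrow> 'a \<Rightarrow> 'a \<Rightarrow> bool" where
  "arc E r u v \<longleftrightarrow> {u, v} \<in> E \<and> (\<exists>ps. upath E (ps @ [u, v]) \<and> hd (ps @ [u, v]) = r)"

definition dpath :: "'a set set \<Rightarrow> 'a \<Rightarrow> 'a list \<Rightarrow> bool" where
  "dpath E r ps \<longleftrightarrow> (\<forall>i. Suc i < length ps \<longrightarrow> arc E r (ps ! i) (ps ! Suc i))"

definition visible :: "'a set set \<Rightarrow> 'a \<Rightarrow> ('a set \<Rightarrow> nat) \<Rightarrow> 'a \<times> 'a \<Rightarrow> 'a \<times> 'a \<Rightarrow> bool" where
  "visible E r f e e' \<longleftrightarrow> arc E r (fst e) (snd e) \<and> arc E r (fst e') (snd e') \<and>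
     (\<exists>ps. dpath E r ps \<and> length ps \<ge> 2 \<and> ps ! 0 = fst e \<and> ps ! 1 = snd e \<and>
        ps ! (length ps - 2) = fst e' \<and> ps ! (length ps - 1) = snd e' \<and>
        (\<forall>e''\<in>path_edges ps. f e'' \<le> f {fst e', snd e'}))"

definition vis_seq :: "'a set set \<Rightarrow> 'a \<Rightarrow> ('a set \<Rightarrow> nat) \<Rightarrow> 'a \<times> 'a \<Rightarrow> nat set" where
  "vis_seq E r f e = {f {fst e', snd e'} | e'. visible E r f e e'}"

definition S_set :: "'a set set \<Rightarrow> 'a \<Rightarrow> ('a set \<Rightarrow> nat) \<Rightarrow> 'a \<Rightarrow> nat set" where
  "S_set E r f u = (\<Union>v\<in>{v. arc E r u v}. vis_seq E r f (u, v))"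

end

theory Submission
  imports Defs "HOL-Library.Sublist"
begin

(* Orient the tree away from r.  An edge (p, c) is the last edge of the root path of c, and the
   root paths of the lower ends of two distinct edges either extend one another or branch at a
   vertex u.  Accordingly the tree path between the two edges either starts with (p, c) and
   continues along a directed path from c down to the other edge, or runs up one branch at u
   and down another.  As paths between distinct edges are unique, f is valid iff no such path
   has the common positive label a of its end edges as its maximum.  For a descending path this
   maximum property says that a is visible from c, i.e. a is in S(c), which (1) excludes; for a
   branching path it says that a is visible from u along both branches, which (2) excludes. *)

lemma upath_iff_successively:
  "upath E ps \<longleftrightarrow> ps \<noteq> [] \<and> distinct ps \<and> successively (\<lambda>x y. {x, y} \<in> E) ps"
  unfolding upath_def successively_conv_nth by auto

lemma upath_singleton [simp]: "upath E [x]"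
  by (simp add: upath_def)

lemma upath_Cons_Cons:
  "upath E (x # y # zs) \<longleftrightarrow> {x, y} \<in> E \<and> x \<notin> set (y # zs) \<and> upath E (y # zs)"
  by (auto simp: upath_iff_successively)

lemma upath_append:
  assumes "xs \<noteq> []" "ys \<noteq> []"
  shows "upath E (xs @ ys) \<longleftrightarrow>
    upath E xs \<and> upath E ys \<and> {last xs, hd ys} \<in> E \<and> set xs \<inter> set ys = {}"
  using assms by (auto simp: upath_iff_successively successively_append_iff)

lemma upath_rev [simp]: "upath E (rev ps) \<longleftrightarrow> upath E ps"
  by (auto simp: upath_iff_successively insert_commute)

lemma upath_appendD1: "upath E (xs @ ys) \<Longrightarrow> xs \<noteq> [] \<Longrightarrow> upath E xs"
  by (cases "ys = []") (auto simp: upath_append)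

lemma upath_appendD2: "upath E (xs @ ys) \<Longrightarrow> ys \<noteq> [] \<Longrightarrow> upath E ys"
  by (cases "xs = []") (auto simp: upath_append)

lemma path_edges_Nil [simp]: "path_edges [] = {}"
  and path_edges_singleton [simp]: "path_edges [x] = {}"
  by (auto simp: path_edges_def)

lemma path_edges_Cons_Cons [simp]:
  "path_edges (x # y # zs) = insert {x, y} (path_edges (y # zs))"
proof -
  have "path_edges ps = (\<lambda>i. {ps ! i, ps ! Suc i}) ` {..<length ps - 1}" for ps :: "'a list"
    unfolding path_edges_def by auto
  then show ?thesis
    by (simp add: lessThan_Suc_eq_insert_0 image_image)
qed

lemma path_edges_Cons_subset: "path_edges xs \<subseteq> path_edges (x # xs)"
  by (cases xs) auto

lemma path_edges_snoc_snoc [simp]: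
  "path_edges (xs @ [a, b]) = insert {a, b} (path_edges (xs @ [a]))"
  by (induction xs rule: induct_list012) auto

lemma path_edges_append:
  "xs \<noteq> [] \<Longrightarrow> ys \<noteq> [] \<Longrightarrow>
    path_edges (xs @ ys) = path_edges xs \<union> path_edges ys \<union> {{last xs, hd ys}}"
proof (induction xs rule: induct_list012)
  case (2 x)
  then show ?case by (cases ys) auto
qed auto

lemma path_edges_rev [simp]: "path_edges (rev ps) = path_edges ps"
proof (induction ps rule: induct_list012)
  case (3 x y zs)
  then show ?case by (simp add: insert_commute)
qed auto

lemma path_edges_rev_append:
  "path_edges (rev (v # as) @ u # ws) = path_edges (u # v # as) \<union> path_edges (u # ws)"
proof -
  have "path_edges (rev (v # as) @ u # ws) =
      path_edges (rev (v # as)) \<union> path_edges (u # ws) \<union> {{last (rev (v # as)), u}}"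
    using path_edges_append[of "rev (v # as)" "u # ws"] by simp
  then show ?thesis
    by (simp del: rev.simps add: last_rev insert_commute)
qed

lemma path_edges_subset: "upath E ps \<Longrightarrow> path_edges ps \<subseteq> E"
  unfolding upath_def path_edges_def by auto

lemma list_snoc_snoc_cases:
  assumes "2 \<le> length ps"
  obtains xs a b where "ps = xs @ [a, b]"
proof -
  have "\<exists>xs a b. ps = xs @ [a, b]"
    using assms
  proof (induction ps rule: induct_list012)
    case (3 x y zs)
    then show ?case
      by (cases zs) (auto intro: exI[of _ "x # _"])
  qed auto
  with that show thesis by blast
qed

(* A junk value on lists with fewer than two vertices. *)
definition last_edge :: "'a list \<Rightarrow> 'a set" where
  "last_edge ps = {ps ! (length ps - 2), ps ! (length ps - 1)}"

lemma last_edge_snoc_snoc [simp]: "last_edge (xs @ [a, b]) = {a, b}"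
  by (simp add: last_edge_def nth_append)

lemma last_edge_append:
  assumes "2 \<le> length ys"
  shows "last_edge (xs @ ys) = last_edge ys"
  using assms by (elim list_snoc_snoc_cases) (metis append_assoc last_edge_snoc_snoc)

lemma path_between_edges_iff:
  "path_between_edges E e1 e2 ps \<longleftrightarrow> upath E ps \<and>
     (\<exists>x y zs. ps = x # y # zs \<and> e1 = {x, y}) \<and> (\<exists>xs a b. ps = xs @ [a, b] \<and> e2 = {a, b})"
proof -
  have "2 \<le> length ps \<and> {ps ! 0, ps ! 1} = e1 \<longleftrightarrow> (\<exists>x y zs. ps = x # y # zs \<and> e1 = {x, y})"
    by (auto simp: Suc_le_length_iff numeral_2_eq_2)
  moreover have "2 \<le> length ps \<and> last_edge ps = e2 \<longleftrightarrow> (\<exists>xs a b. ps = xs @ [a, b] \<and> e2 = {a, b})"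
    by (auto elim!: list_snoc_snoc_cases)
  ultimately show ?thesis
    unfolding path_between_edges_def last_edge_def by blast
qed

lemma path_between_edges_mem_path_edges:
  assumes "path_between_edges E e1 e2 ps"
  shows "e1 \<in> path_edges ps" "e2 \<in> path_edges ps"
proof -
  obtain x y zs xs a b where first: "ps = x # y # zs" "e1 = {x, y}"
    and last: "ps = xs @ [a, b]" "e2 = {a, b}"
    using assms unfolding path_between_edges_iff by blast
  from first show "e1 \<in> path_edges ps"
    by simp
  from last show "e2 \<in> path_edges ps"
    by simp
qed

lemma path_between_edges_rev:
  assumes "path_between_edges E e1 e2 ps"
  shows "path_between_edges E e2 e1 (rev ps)"
proof -
  obtain x y zs xs a b where "upath E ps" and first: "ps = x # y # zs" "e1 = {x, y}"
    and last: "ps = xs @ [a, b]" "e2 = {a, b}"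
    using assms unfolding path_between_edges_iff by blast
  have "rev ps = b # a # rev xs" "e2 = {b, a}"
    using last by (simp_all add: insert_commute)
  moreover have "rev ps = rev zs @ [y, x]" "e1 = {y, x}"
    using first by (simp_all add: insert_commute)
  moreover have "upath E (rev ps)"
    using \<open>upath E ps\<close> by simp
  ultimately show ?thesis
    unfolding path_between_edges_iff by blast
qed

lemma path_between_edges_neq:
  assumes "path_between_edges E e1 e2 ps" "3 \<le> length ps"
  shows "e1 \<noteq> e2"
proof -
  obtain x y zs xs a b where ps: "ps = x # y # zs" "ps = xs @ [a, b]"
    and edges: "e1 = {x, y}" "e2 = {a, b}" and "distinct ps"
    using assms(1) unfolding path_between_edges_iff upath_def by blast
  from assms(2) ps have "y # zs = tl xs @ [a, b]"
    by (cases xs) auto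
  then have "{a, b} \<subseteq> set (y # zs)"
    by simp
  moreover have "x \<notin> set (y # zs)"
    using \<open>distinct ps\<close> ps(1) by simp
  ultimately show ?thesis
    using edges by blast
qed

lemma path_between_edges_Cons_Cons:
  assumes "upath E (p # c # ys)" "ys \<noteq> []"
  shows "path_between_edges E {p, c} (last_edge (c # ys)) (p # c # ys)"
proof -
  have "2 \<le> length (c # ys)"
    using assms(2) by (cases ys) auto
  then obtain xs a b where "c # ys = xs @ [a, b]"
    by (rule list_snoc_snoc_cases)
  with assms(1) show ?thesis
    unfolding path_between_edges_iff by (metis append_Cons last_edge_snoc_snoc)
qed

lemma path_between_edges_join:
  assumes "upath E (u # v # as)" "upath E (u # w # bs)" "set (v # as) \<inter> set (w # bs) = {}"
  shows "path_between_edges E (last_edge (u # v # as)) (last_edge (u # w # bs))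
      (rev (v # as) @ u # w # bs)"
proof -
  have "upath E (rev (v # as) @ u # w # bs)"
    using assms by (simp add: upath_append upath_Cons_Cons insert_commute last_rev del: rev.simps)
  moreover obtain xs a b where v_last: "u # v # as = xs @ [a, b]"
    using list_snoc_snoc_cases[where ps = "u # v # as"] by auto
  then have "rev (u # v # as) = b # a # rev xs"
    by simp
  then have "rev (v # as) @ u # w # bs = b # a # (rev xs @ w # bs)"
    by simp
  moreover have "last_edge (u # v # as) = {b, a}"
    using v_last by (simp add: insert_commute)
  moreover obtain ys c d where w_last: "u # w # bs = ys @ [c, d]"
    using list_snoc_snoc_cases[where ps = "u # w # bs"] by auto
  then have "rev (v # as) @ u # w # bs = (rev (v # as) @ ys) @ [c, d]"
    "last_edge (u # w # bs) = {c, d}"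
    by simp_all
  ultimately show ?thesis
    unfolding path_between_edges_iff by blast
qed

lemma dpath_iff_successively: "dpath E r ps \<longleftrightarrow> successively (arc E r) ps"
  unfolding dpath_def successively_conv_nth ..

lemma mem_vis_seq_iff:
  "l \<in> vis_seq E r f (u, v) \<longleftrightarrow>
    (\<exists>zs. dpath E r (u # v # zs) \<and> l = f (last_edge (u # v # zs)) \<and>
      (\<forall>e\<in>path_edges (u # v # zs). f e \<le> l))"
proof
  assume "l \<in> vis_seq E r f (u, v)"
  then obtain ps where ps: "dpath E r ps" "2 \<le> length ps" "ps ! 0 = u" "ps ! 1 = v"
    "l = f (last_edge ps)" "\<forall>e\<in>path_edges ps. f e \<le> l"
    unfolding vis_seq_def visible_def last_edge_def by auto
  then have "ps = u # v # drop 2 ps"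
    by (auto simp: Suc_le_length_iff numeral_2_eq_2)
  with ps show "\<exists>zs. dpath E r (u # v # zs) \<and> l = f (last_edge (u # v # zs)) \<and>
      (\<forall>e\<in>path_edges (u # v # zs). f e \<le> l)"
    by metis
next
  assume "\<exists>zs. dpath E r (u # v # zs) \<and> l = f (last_edge (u # v # zs)) \<and>
      (\<forall>e\<in>path_edges (u # v # zs). f e \<le> l)"
  then obtain zs where zs: "dpath E r (u # v # zs)" "l = f (last_edge (u # v # zs))"
      "\<forall>e\<in>path_edges (u # v # zs). f e \<le> l"
    by blast
  obtain xs a b where ab: "u # v # zs = xs @ [a, b]"
    by (rule list_snoc_snoc_cases[where ps = "u # v # zs"]) auto
  have "arc E r u v"
    using zs(1) by (simp add: dpath_iff_successively)
  moreover have "arc E r a b"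
    using zs(1) unfolding ab dpath_iff_successively by (simp add: successively_append_iff)
  moreover have "(u # v # zs) ! (length (u # v # zs) - 2) = a"
    "(u # v # zs) ! (length (u # v # zs) - 1) = b"
    unfolding ab by (simp_all add: nth_append)
  moreover have "l = f {a, b}"
    using zs(2) ab by simp
  ultimately have "visible E r f (u, v) (a, b)"
    using zs(1,3) unfolding visible_def by (auto intro!: exI[of _ "u # v # zs"])
  then show "l \<in> vis_seq E r f (u, v)"
    unfolding vis_seq_def using zs(2) ab by force
qed

locale rooted_tree =
  fixes V :: "'a set" and E :: "'a set set" and r :: 'a
  assumes tree: "is_tree V E" and root_in_V: "r \<in> V"
begin

lemma edge_cases:
  assumes "e \<in> E"
  obtains x y where "e = {x, y}" "x \<in> V" "y \<in> V" "x \<noteq> y"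
proof -
  have "\<forall>e\<in>E. \<exists>x y. e = {x, y} \<and> x \<in> V \<and> y \<in> V \<and> x \<noteq> y"
    using tree by (simp add: is_tree_def)
  with assms that show thesis by blast
qed

lemma edge_in_V:
  assumes "{x, y} \<in> E"
  shows "x \<in> V" "y \<in> V" "x \<noteq> y"
  using edge_cases[OF assms] by (metis doubleton_eq_iff)+

lemma upath_set_subset: "upath E ps \<Longrightarrow> 2 \<le> length ps \<Longrightarrow> set ps \<subseteq> V"
proof (induction ps rule: induct_list012)
  case (3 x y zs)
  then show ?case
    by (cases zs) (auto simp: upath_Cons_Cons dest: edge_in_V)
qed auto

lemma upath_unique:
  assumes "upath E ps" "upath E qs" "hd ps = hd qs" "last ps = last qs" "hd ps \<in> V"
  shows "ps = qs"
proof -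
  have "last ps \<in> V"
  proof (cases "2 \<le> length ps")
    case True
    then show ?thesis
      using upath_set_subset[OF assms(1)] assms(1) by (auto simp: upath_def)
  next
    case False
    with assms(1,5) show ?thesis
      by (cases ps rule: remdups_adj.cases) (auto simp: upath_def)
  qed
  then have "\<exists>!p. upath E p \<and> hd p = hd ps \<and> last p = last ps"
    using tree assms(5) by (simp add: is_tree_def)
  then obtain p where unique: "\<And>q. upath E q \<and> hd q = hd ps \<and> last q = last ps \<Longrightarrow> q = p"
    by (elim ex1E) blast
  have "ps = p" "qs = p"
    using assms(1-4) by (auto intro!: unique)
  then show ?thesis by simp
qed

lemma root_path_exists:
  assumes "v \<in> V"
  obtains R where "upath E R" "hd R = r" "last R = v"
proof -
  have "\<exists>!R. upath E R \<and> hd R = r \<and> last R = v"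
    using tree root_in_V assms by (simp add: is_tree_def)
  with that show thesis
    using ex1_implies_ex by blast
qed

lemma upath_last_determined_by_last_edge:
  assumes "upath E ps" "upath E qs" "ps = xs @ [a, b]" "qs = ys @ [c, d]" "{a, b} = {c, d}"
    and "hd ps = hd qs"
  shows "last ps = last qs"
proof (rule ccontr)
  assume "last ps \<noteq> last qs"
  with assms(3-5) have "c = b" "d = a"
    by (auto simp: doubleton_eq_iff)
  have "xs @ [a] = qs"
  proof (rule upath_unique)
    show "upath E (xs @ [a])"
      using upath_appendD1[of E "xs @ [a]" "[b]"] assms(1,3) by simp
    show "hd (xs @ [a]) = hd qs"
      using assms(3,6) by (cases xs) auto
    show "hd (xs @ [a]) \<in> V"
      using upath_set_subset[OF assms(1)] assms(3) by (cases xs) auto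
    show "last (xs @ [a]) = last qs"
      using assms(4) \<open>d = a\<close> by simp
  qed (rule assms(2))
  then have "xs = ys @ [b]"
    using assms(4) \<open>c = b\<close> by simp
  moreover have "b \<notin> set xs"
    using assms(1,3) by (simp add: upath_def)
  ultimately show False
    by simp
qed

lemma path_between_edges_same_hd:
  assumes "path_between_edges E e1 e2 ps" "path_between_edges E e1 e2 qs" "hd ps = hd qs"
  shows "ps = qs"
proof -
  obtain x y zs xs a b where "upath E ps" "ps = x # y # zs"
    and ps_last: "ps = xs @ [a, b]" "e2 = {a, b}"
    using assms(1) unfolding path_between_edges_iff by blast
  obtain xs' a' b' where "upath E qs" and qs_last: "qs = xs' @ [a', b']" "e2 = {a', b'}"
    using assms(2) unfolding path_between_edges_iff by blast
  have "last ps = last qs"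
    using upath_last_determined_by_last_edge[OF \<open>upath E ps\<close> \<open>upath E qs\<close> ps_last(1) qs_last(1)]
      ps_last(2) qs_last(2) assms(3) by simp
  moreover have "hd ps \<in> V"
    using upath_set_subset[OF \<open>upath E ps\<close>] \<open>ps = x # y # zs\<close> by simp
  ultimately show ?thesis
    using upath_unique[OF \<open>upath E ps\<close> \<open>upath E qs\<close> assms(3)] by simp
qed

(* If the paths start at different ends of e1, then the tail of ps and qs start at the same
   vertex and end with e2, so ps and qs end at the same vertex, and the reversed paths apply. *)
lemma path_between_edges_unique:
  assumes ps: "path_between_edges E e1 e2 ps" and qs: "path_between_edges E e1 e2 qs"
    and "e1 \<noteq> e2"
  shows "ps = qs"
proof (cases "hd ps = hd qs")
  case True
  then show ?thesis
    using path_between_edges_same_hd[OF ps qs] by simp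
next
  case False
  obtain x y zs xs a b where "upath E ps" and ps_first: "ps = x # y # zs" "e1 = {x, y}"
    and ps_last: "ps = xs @ [a, b]" "e2 = {a, b}"
    using ps unfolding path_between_edges_iff by blast
  obtain x' y' zs' xs' a' b' where "upath E qs" and qs_first: "qs = x' # y' # zs'" "e1 = {x', y'}"
    and qs_last: "qs = xs' @ [a', b']" "e2 = {a', b'}"
    using qs unfolding path_between_edges_iff by blast
  have "x' = y"
    using False ps_first qs_first by (auto simp: doubleton_eq_iff)
  have "zs \<noteq> []"
    using ps_first ps_last \<open>e1 \<noteq> e2\<close> by (auto simp: Cons_eq_append_conv)
  then have tl_last: "y # zs = tl xs @ [a, b]"
    using ps_first(1) ps_last(1) by (cases xs) auto
  have "upath E (y # zs)"
    using \<open>upath E ps\<close> ps_first(1) by (simp add: upath_Cons_Cons)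
  then have "last (y # zs) = last qs"
    using upath_last_determined_by_last_edge[OF _ \<open>upath E qs\<close> tl_last qs_last(1)]
      ps_last(2) qs_last(2) qs_first(1) \<open>x' = y\<close> by simp
  then have "last ps = last qs"
    using ps_first(1) by simp
  then have "hd (rev ps) = hd (rev qs)"
    by (simp add: hd_rev)
  then have "rev ps = rev qs"
    using path_between_edges_same_hd[OF path_between_edges_rev[OF ps] path_between_edges_rev[OF qs]]
    by simp
  then show ?thesis
    by simp
qed

lemma arc_in_V:
  assumes "arc E r u v"
  shows "u \<in> V" "v \<in> V"
  using assms edge_in_V unfolding arc_def by blast+

lemma arc_of_root_path:
  assumes "upath E (xs @ u # v # zs)" "hd (xs @ u # v # zs) = r"
  shows "arc E r u v"
proof -
  have "upath E (xs @ [u, v])"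
    using upath_appendD1[of E "xs @ [u, v]" zs] assms(1) by simp
  moreover have "{u, v} \<in> E"
    using upath_appendD2[of E xs "u # v # zs"] assms(1) by (simp add: upath_Cons_Cons)
  moreover have "hd (xs @ [u, v]) = r"
    using assms(2) by (cases xs) auto
  ultimately show ?thesis
    unfolding arc_def by blast
qed

lemma dpath_of_root_path: "upath E (xs @ zs) \<Longrightarrow> hd (xs @ zs) = r \<Longrightarrow> dpath E r zs"
proof (induction zs arbitrary: xs rule: induct_list012)
  case (3 u v zs)
  then have "arc E r u v"
    by (intro arc_of_root_path)
  moreover have "dpath E r (v # zs)"
    using "3.IH"(2)[of "xs @ [u]"] "3.prems" by simp
  ultimately show ?case
    by (simp add: dpath_iff_successively)
qed (simp_all add: dpath_iff_successively)

lemma root_path_append_dpath: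
  "dpath E r (u # zs) \<Longrightarrow> upath E R \<Longrightarrow> hd R = r \<Longrightarrow> last R = u \<Longrightarrow> upath E (R @ zs)"
proof (induction zs arbitrary: u R)
  case (Cons v zs)
  from Cons.prems(1) have "arc E r u v" "dpath E r (v # zs)"
    by (simp_all add: dpath_iff_successively)
  then obtain ps where ps: "upath E (ps @ [u, v])" "hd (ps @ [u, v]) = r"
    unfolding arc_def by blast
  have "ps @ [u] = R"
  proof (rule upath_unique)
    show "upath E (ps @ [u])"
      using upath_appendD1[of E "ps @ [u]" "[v]"] ps(1) by simp
    show "hd (ps @ [u]) = hd R"
      using ps(2) Cons.prems(3) by (cases ps) auto
    then show "hd (ps @ [u]) \<in> V"
      using Cons.prems(3) root_in_V by simp
  qed (use Cons.prems(2,4) in simp_all)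
  then have "upath E (R @ [v])" "hd (R @ [v]) = r"
    using ps by auto
  from Cons.IH[OF \<open>dpath E r (v # zs)\<close> this] show ?case
    by simp
qed simp

lemma edge_orientation:
  assumes "e \<in> E"
  obtains p c where "e = {p, c}" "arc E r p c"
proof -
  obtain x y where e: "e = {x, y}" "y \<in> V" "x \<noteq> y"
    using edge_cases[OF assms] by metis
  obtain L where L: "upath E L" "hd L = r" "last L = y"
    using root_path_exists[OF e(2)] by metis
  have "L \<noteq> []"
    using L(1) by (simp add: upath_def)
  show thesis
  proof (cases "x \<in> set L")
    case False
    obtain L' where L': "L = L' @ [y]"
      using append_butlast_last_id[OF \<open>L \<noteq> []\<close>] L(3) by metis
    have "upath E (L @ [x])"
      using L(1) \<open>L \<noteq> []\<close> False assms e(1) L(3) by (simp add: upath_append insert_commute)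
    then have "arc E r y x"
      using arc_of_root_path[of L' y x "[]"] L(2) L' by (cases L') auto
    then show thesis
      using that e(1) by (metis insert_commute)
  next
    case True
    then obtain A B where L_split: "L = A @ x # B"
      by (meson split_list)
    have "B \<noteq> []"
      using L(3) L_split e(3) by auto
    then have "last B = y"
      using L(3) L_split by simp
    then have "y \<in> set B"
      using \<open>B \<noteq> []\<close> last_in_set by metis
    then have "y \<notin> set (A @ [x])"
      using L(1) L_split by (auto simp: upath_def)
    moreover have "upath E (A @ [x])"
      using upath_appendD1[of E "A @ [x]" B] L(1) L_split by simp
    ultimately have "upath E (A @ [x, y])"
      using upath_append[of "A @ [x]" "[y]"] assms e(1) by simp
    moreover have "hd (A @ [x, y]) = r"
      using L(2) L_split by (cases A) auto
    ultimately have "arc E r x y"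
      using arc_of_root_path[of A x y "[]"] by simp
    then show thesis
      using that e(1) by blast
  qed
qed

lemma root_path_branches_disjoint:
  assumes "upath E (C @ v # as)" "upath E (C @ w # bs)" "hd C = r" "C \<noteq> []" "v \<noteq> w"
  shows "set (v # as) \<inter> set (w # bs) = {}"
proof (rule ccontr)
  assume "set (v # as) \<inter> set (w # bs) \<noteq> {}"
  then obtain z as1 as2 bs1 bs2 where as: "v # as = as1 @ z # as2" and bs: "w # bs = bs1 @ z # bs2"
    by (metis disjoint_iff split_list)
  have "upath E (C @ as1 @ [z])"
    using upath_appendD1[of E "C @ as1 @ [z]" as2] assms(1) as by simp
  moreover have "upath E (C @ bs1 @ [z])"
    using upath_appendD1[of E "C @ bs1 @ [z]" bs2] assms(2) bs by simp
  ultimately have "C @ as1 @ [z] = C @ bs1 @ [z]"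
    by (rule upath_unique) (use assms(3,4) root_in_V in simp_all)
  then show False
    using as bs assms(5) by (cases as1) auto
qed

lemma path_between_arc_and_descendant_edge:
  assumes "arc E r p c" "dpath E r (c # ys)" "ys \<noteq> []"
  shows "path_between_edges E {p, c} (last_edge (c # ys)) (p # c # ys)"
    and "{p, c} \<noteq> last_edge (c # ys)"
proof -
  obtain R where R: "upath E (R @ [p, c])" "hd (R @ [p, c]) = r"
    using assms(1) unfolding arc_def by blast
  have "upath E ((R @ [p, c]) @ ys)"
    using root_path_append_dpath[OF assms(2) R] by simp
  then have "upath E (p # c # ys)"
    using upath_appendD2[of E R "p # c # ys"] by simp
  then show pb: "path_between_edges E {p, c} (last_edge (c # ys)) (p # c # ys)"
    using assms(3) by (rule path_between_edges_Cons_Cons)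
  show "{p, c} \<noteq> last_edge (c # ys)"
    using path_between_edges_neq[OF pb] assms(3) by (cases ys) auto
qed

lemma path_between_sibling_descendant_edges:
  assumes "dpath E r (u # v # as)" "dpath E r (u # w # bs)" "v \<noteq> w"
  shows "path_between_edges E (last_edge (u # v # as)) (last_edge (u # w # bs))
      (rev (v # as) @ u # w # bs)"
    and "last_edge (u # v # as) \<noteq> last_edge (u # w # bs)"
proof -
  have "arc E r u v"
    using assms(1) by (simp add: dpath_iff_successively)
  then have "u \<in> V"
    by (rule arc_in_V)
  then obtain R where R: "upath E R" "hd R = r" "last R = u"
    by (rule root_path_exists)
  then obtain R' where R': "R = R' @ [u]"
    by (metis append_butlast_last_id upath_def)
  have v_branch: "upath E (R @ v # as)" and w_branch: "upath E (R @ w # bs)"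
    using root_path_append_dpath[OF assms(1) R] root_path_append_dpath[OF assms(2) R] by simp_all
  have "set (v # as) \<inter> set (w # bs) = {}"
    using root_path_branches_disjoint[OF v_branch w_branch R(2) _ assms(3)] R' by simp
  moreover have "upath E (u # v # as)" "upath E (u # w # bs)"
    using upath_appendD2[of E R' "u # v # as"] upath_appendD2[of E R' "u # w # bs"]
      v_branch w_branch R' by simp_all
  ultimately show pb: "path_between_edges E (last_edge (u # v # as)) (last_edge (u # w # bs))
      (rev (v # as) @ u # w # bs)"
    by (intro path_between_edges_join)
  show "last_edge (u # v # as) \<noteq> last_edge (u # w # bs)"
    by (rule path_between_edges_neq[OF pb]) simp
qed

lemma descendant_of_root_path_prefix:
  assumes "upath E (R' @ [p', c'])" "hd (R' @ [p', c']) = r"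
    and "prefix (R @ [p, c]) (R' @ [p', c'])" "R @ [p, c] \<noteq> R' @ [p', c']"
  obtains ys where "dpath E r (c # ys)" "ys \<noteq> []" "{p', c'} = last_edge (c # ys)"
proof -
  obtain ys where "R' @ [p', c'] = (R @ [p, c]) @ ys"
    using assms(3) by (auto simp: prefix_def)
  then have ys: "R' @ [p', c'] = R @ p # c # ys" "ys \<noteq> []"
    using assms(4) by auto
  have "dpath E r (c # ys)"
    using dpath_of_root_path[of "R @ [p]" "c # ys"] assms(1,2) ys(1) by simp
  moreover have "{p', c'} = last_edge (c # ys)"
    using last_edge_append[of "c # ys" "R @ [p]"] ys(1)[symmetric] ys(2) by (simp add: Suc_le_eq)
  ultimately show thesis
    using that ys(2) by blast
qed

lemma distinct_edges_cases:
  assumes "e1 \<in> E" "e2 \<in> E" "e1 \<noteq> e2"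
  obtains
    (descendant) p c ys where "arc E r p c" "e1 = {p, c}" "dpath E r (c # ys)" "ys \<noteq> []"
      "e2 = last_edge (c # ys)"
  | (ancestor) p c ys where "arc E r p c" "e2 = {p, c}" "dpath E r (c # ys)" "ys \<noteq> []"
      "e1 = last_edge (c # ys)"
  | (branch) u v w as bs where "v \<noteq> w" "dpath E r (u # v # as)" "dpath E r (u # w # bs)"
      "e1 = last_edge (u # v # as)" "e2 = last_edge (u # w # bs)"
proof -
  obtain p1 c1 R1 where e1: "e1 = {p1, c1}" "arc E r p1 c1"
    and R1: "upath E (R1 @ [p1, c1])" "hd (R1 @ [p1, c1]) = r"
    using edge_orientation[OF assms(1)] unfolding arc_def by metis
  obtain p2 c2 R2 where e2: "e2 = {p2, c2}" "arc E r p2 c2"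
    and R2: "upath E (R2 @ [p2, c2])" "hd (R2 @ [p2, c2]) = r"
    using edge_orientation[OF assms(2)] unfolding arc_def by metis
  have "R1 @ [p1, c1] \<noteq> R2 @ [p2, c2]"
    using assms(3) e1(1) e2(1) by auto
  consider "prefix (R1 @ [p1, c1]) (R2 @ [p2, c2])" | "prefix (R2 @ [p2, c2]) (R1 @ [p1, c1])"
    | "R1 @ [p1, c1] \<parallel> R2 @ [p2, c2]"
    by (meson prefix_cases strict_prefix_def)
  then show thesis
  proof cases
    case 1
    then obtain ys where "dpath E r (c1 # ys)" "ys \<noteq> []" "{p2, c2} = last_edge (c1 # ys)"
      using descendant_of_root_path_prefix[OF R2] \<open>R1 @ [p1, c1] \<noteq> _\<close> by blast
    then show thesis
      using descendant[OF e1(2,1)] e2(1) by simp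
  next
    case 2
    then obtain ys where "dpath E r (c2 # ys)" "ys \<noteq> []" "{p1, c1} = last_edge (c2 # ys)"
      using descendant_of_root_path_prefix[OF R1] \<open>R1 @ [p1, c1] \<noteq> _\<close> by metis
    then show thesis
      using ancestor[OF e2(2,1)] e1(1) by simp
  next
    case 3
    then obtain C v as w bs where branches: "v \<noteq> w" "R1 @ [p1, c1] = C @ v # as"
      "R2 @ [p2, c2] = C @ w # bs"
      using parallel_decomp by blast
    have "C \<noteq> []"
      using branches R1(2) R2(2) by auto
    then obtain C' u where C: "C = C' @ [u]"
      by (metis append_butlast_last_id)
    have "dpath E r (u # v # as)"
      using dpath_of_root_path[of C' "u # v # as"] R1 branches(2) C by simp
    moreover have "dpath E r (u # w # bs)"
      using dpath_of_root_path[of C' "u # w # bs"] R2 branches(3) C by simp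
    moreover have "e1 = last_edge (u # v # as)"
      using last_edge_append[of "u # v # as" C'] branches(2)[symmetric] C e1(1) by simp
    moreover have "e2 = last_edge (u # w # bs)"
      using last_edge_append[of "u # w # bs" C'] branches(3)[symmetric] C e2(1) by simp
    ultimately show thesis
      using branch branches(1) by blast
  qed
qed

lemma valid_labeling_path_between:
  assumes "valid_labeling E f" "path_between_edges E e1 e2 ps" "e1 \<noteq> e2"
    and "f e1 = f e2" "0 < f e1"
  shows "\<exists>e\<in>path_edges ps. f e1 < f e"
proof -
  have "upath E ps"
    using assms(2) by (simp add: path_between_edges_def)
  then have "e1 \<in> E" "e2 \<in> E"
    using path_between_edges_mem_path_edges[OF assms(2)] path_edges_subset by blast+
  then obtain qs e where "path_between_edges E e1 e2 qs" "e \<in> path_edges qs" "f e1 < f e"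
    using assms unfolding valid_labeling_def by blast
  with path_between_edges_unique[OF assms(2) _ assms(3)] show ?thesis
    by blast
qed

lemma valid_labeling_entering_label:
  assumes valid: "valid_labeling E f" and "arc E r u' u" and "f {u', u} \<in> S_set E r f u"
  shows "f {u', u} = 0"
proof (rule ccontr)
  assume "f {u', u} \<noteq> 0"
  from assms(3) obtain v where "f {u', u} \<in> vis_seq E r f (u, v)"
    unfolding S_set_def by blast
  then obtain zs where ds: "dpath E r (u # v # zs)" "f {u', u} = f (last_edge (u # v # zs))"
    "\<forall>e\<in>path_edges (u # v # zs). f e \<le> f {u', u}"
    unfolding mem_vis_seq_iff by blast
  have "path_between_edges E {u', u} (last_edge (u # v # zs)) (u' # u # v # zs)"
    "{u', u} \<noteq> last_edge (u # v # zs)"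
    using path_between_arc_and_descendant_edge[OF assms(2) ds(1)] by simp_all
  then obtain e where "e \<in> path_edges (u' # u # v # zs)" "f {u', u} < f e"
    using valid_labeling_path_between[OF valid] ds(2) \<open>f {u', u} \<noteq> 0\<close> by blast
  with ds(3) show False
    by (auto simp del: path_edges_Cons_Cons simp add: path_edges_Cons_Cons[of u'])
qed

lemma valid_labeling_sibling_vis_seqs:
  assumes valid: "valid_labeling E f" and "arc E r u v" "arc E r u w" "v \<noteq> w"
  shows "vis_seq E r f (u, v) \<inter> vis_seq E r f (u, w) \<subseteq> {0}"
proof
  fix l
  assume "l \<in> vis_seq E r f (u, v) \<inter> vis_seq E r f (u, w)"
  then obtain as bs where v_branch: "dpath E r (u # v # as)" "l = f (last_edge (u # v # as))"
      "\<forall>e\<in>path_edges (u # v # as). f e \<le> l"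
    and w_branch: "dpath E r (u # w # bs)" "l = f (last_edge (u # w # bs))"
      "\<forall>e\<in>path_edges (u # w # bs). f e \<le> l"
    unfolding Int_iff mem_vis_seq_iff by blast
  show "l \<in> {0}"
  proof (rule ccontr)
    assume "l \<notin> {0}"
    then obtain e where "e \<in> path_edges (rev (v # as) @ u # w # bs)" "l < f e"
      using valid_labeling_path_between[OF valid
          path_between_sibling_descendant_edges[OF v_branch(1) w_branch(1) assms(4)]]
        v_branch(2) w_branch(2) by auto
    with v_branch(3) w_branch(3) show False
      unfolding path_edges_rev_append by auto
  qed
qed

lemma descendant_edges_separated:
  assumes entering: "\<And>u u'. arc E r u' u \<Longrightarrow> f {u', u} \<in> S_set E r f u \<Longrightarrow> f {u', u} = 0"
    and "arc E r p c" "dpath E r (c # ys)" "ys \<noteq> []" "f (last_edge (c # ys)) = f {p, c}"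
    and "0 < f {p, c}"
  shows "\<exists>e\<in>path_edges (c # ys). f {p, c} < f e"
proof (rule ccontr)
  assume "\<not> ?thesis"
  then have below: "\<forall>e\<in>path_edges (c # ys). f e \<le> f {p, c}"
    by (simp add: not_less)
  obtain v zs where ys: "ys = v # zs"
    using assms(4) by (cases ys) auto
  then have "arc E r c v"
    using assms(3) by (simp add: dpath_iff_successively)
  moreover have "f {p, c} \<in> vis_seq E r f (c, v)"
    unfolding mem_vis_seq_iff using assms(3,5) below ys by auto
  ultimately have "f {p, c} \<in> S_set E r f c"
    unfolding S_set_def by blast
  with entering[OF assms(2)] assms(6) show False
    by simp
qed

lemma sibling_branch_edges_separated:
  assumes siblings: "\<And>u v w. arc E r u v \<Longrightarrow> arc E r u w \<Longrightarrow> v \<noteq> w \<Longrightarrow>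
      vis_seq E r f (u, v) \<inter> vis_seq E r f (u, w) \<subseteq> {0}"
    and "dpath E r (u # v # as)" "dpath E r (u # w # bs)" "v \<noteq> w"
    and "f (last_edge (u # v # as)) = l" "f (last_edge (u # w # bs)) = l" "0 < l"
  shows "\<exists>e\<in>path_edges (u # v # as) \<union> path_edges (u # w # bs). l < f e"
proof (rule ccontr)
  assume "\<not> ?thesis"
  then have "l \<in> vis_seq E r f (u, v) \<inter> vis_seq E r f (u, w)"
    unfolding Int_iff mem_vis_seq_iff using assms(2,3,5,6) by (auto simp: not_less)
  moreover have "arc E r u v" "arc E r u w"
    using assms(2,3) by (simp_all add: dpath_iff_successively)
  ultimately show False
    using siblings assms(4,7) by fastforce
qed

lemma valid_labelingI:
  assumes entering: "\<And>u u'. arc E r u' u \<Longrightarrow> f {u', u} \<in> S_set E r f u \<Longrightarrow> f {u', u} = 0"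
    and siblings: "\<And>u v w. arc E r u v \<Longrightarrow> arc E r u w \<Longrightarrow> v \<noteq> w \<Longrightarrow>
      vis_seq E r f (u, v) \<inter> vis_seq E r f (u, w) \<subseteq> {0}"
  shows "valid_labeling E f"
  unfolding valid_labeling_def
proof (intro ballI impI, elim conjE)
  fix e1 e2
  assume "e1 \<in> E" "e2 \<in> E" "e1 \<noteq> e2" "f e1 = f e2" "0 < f e1"
  then show "\<exists>ps e3. path_between_edges E e1 e2 ps \<and> e3 \<in> path_edges ps \<and> f e1 < f e3"
  proof (cases rule: distinct_edges_cases)
    case (descendant p c ys)
    then have "f (last_edge (c # ys)) = f {p, c}" "0 < f {p, c}"
      using \<open>f e1 = f e2\<close> \<open>0 < f e1\<close> by simp_all
    then obtain e where e: "e \<in> path_edges (c # ys)" "f e1 < f e"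
      using descendant_edges_separated[of f, OF entering descendant(1,3,4)] descendant(2) by auto
    have "path_between_edges E e1 e2 (p # c # ys)"
      using path_between_arc_and_descendant_edge(1)[OF descendant(1,3,4)] descendant(2,5) by simp
    moreover have "e \<in> path_edges (p # c # ys)"
      using e(1) path_edges_Cons_subset[of "c # ys" p] by blast
    ultimately show ?thesis
      using e(2) by blast
  next
    case (ancestor p c ys)
    then have "f (last_edge (c # ys)) = f {p, c}" "0 < f {p, c}"
      using \<open>f e1 = f e2\<close> \<open>0 < f e1\<close> by simp_all
    then obtain e where e: "e \<in> path_edges (c # ys)" "f e1 < f e"
      using descendant_edges_separated[of f, OF entering ancestor(1,3,4)] ancestor(5)
        \<open>f e1 = f e2\<close> by auto
    have "path_between_edges E e1 e2 (rev (p # c # ys))"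
      using path_between_edges_rev[OF path_between_arc_and_descendant_edge(1)[OF ancestor(1,3,4)]]
        ancestor(2,5) by simp
    moreover have "e \<in> path_edges (rev (p # c # ys))"
      using e(1) path_edges_Cons_subset[of "c # ys" p] unfolding path_edges_rev by blast
    ultimately show ?thesis
      using e(2) by blast
  next
    case (branch u v w as bs)
    then have "path_between_edges E e1 e2 (rev (v # as) @ u # w # bs)"
      using path_between_sibling_descendant_edges(1)[OF branch(2,3,1)] by simp
    moreover obtain e where "e \<in> path_edges (u # v # as) \<union> path_edges (u # w # bs)" "f e1 < f e"
      using sibling_branch_edges_separated[of f, OF siblings branch(2,3,1)] branch(4,5)
        \<open>f e1 = f e2\<close> \<open>0 < f e1\<close> by auto
    ultimately show ?thesis
      unfolding path_edges_rev_append[symmetric] by blast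
  qed
qed

end

theorem proposition4p2:
  fixes V :: "'a set" and E :: "'a set set" and f :: "'a set \<Rightarrow> nat"
    and k :: nat and r :: 'a
  assumes "is_tree V E"
    and "k \<ge> 1"
    and "\<forall>e\<in>E. f e \<le> k"
    and "r \<in> V"
  shows "valid_labeling E f \<longleftrightarrow>
     ((\<forall>u\<in>V. \<forall>u'. arc E r u' u \<longrightarrow> f {u', u} \<notin> S_set E r f u \<or> f {u', u} = 0) \<and>
      (\<forall>u\<in>V. \<forall>v w. arc E r u v \<and> arc E r u w \<and> v \<noteq> w \<longrightarrow>
          vis_seq E r f (u, v) \<inter> vis_seq E r f (u, w) \<subseteq> {0}))"
proof -
  interpret rooted_tree V E r
    using assms(1,4) by unfold_locales
  show ?thesis (is "_ \<longleftrightarrow> ?entering \<and> ?siblings")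
  proof
    assume "valid_labeling E f"
    then show "?entering \<and> ?siblings"
      by (meson valid_labeling_entering_label valid_labeling_sibling_vis_seqs)
  next
    assume "?entering \<and> ?siblings"
    then show "valid_labeling E f"
      by (intro valid_labelingI) (blast dest: arc_in_V)+
  qed
qed

end
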